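(* Let $\Phi:I\to O$ be a quantum channel and let $\{E_{bk}\}_{b,k}$ be a family of Kraus operators related to $\Phi$, as described in the context. Then the quantum confusability multigraph of $\Phi$ is $$\tilde S_\Phi=\mathrm{span}\Big\{\sum_{i,a,j,a'}e^{aa'}_{ij}\otimes\theta_{(E_{bl}e^{a'}_j),(E_{bk}e^a_i)}\ :\ b,k,l\Big\}\subseteq B(H_{in})\otimes O^{op}.$$
   Context: All Hilbert spaces are finite dimensional; inner products are linear in the second variable. $H_{in}=\bigoplus_a H^a_{in}$, $H_{out}=\bigoplus_b H^b_{out}$, $I=\bigoplus_a B(H^a_{in})\subseteq B(H_{in})$, $O=\bigoplus_b B(H^b_{out})\subseteq B(H_{out})$. A quantum channel is a trace-preserving completely positive map $\Phi:I\to O$. $\{e^a_i\}_i$ is an orthonormal basis of $H^a_{in}$; $e^{aa'}_{ij}=\theta_{e^a_i,e^{a'}_j}$ are the matrix units of $B(H_{in})$, where $\theta_{\xi,\eta}(\eta')=\langle\eta,\eta'\rangle\xi$; $e^a_{ij}=e^{aa}_{ij}$. Let $i_a:H^a_{in}\to H_{in}$, $j_b:H^b_{out}\to H_{out}$ be the canonical inclusions. Kraus operators related to $\Phi$: for each $a,b$ the compression $x\mapsto j_b^*\Phi(i_a x i_a^* )j_b$ is CP with Kraus operators $E_{abk}:H^a_{in}\to H^b_{out}$, and after renaming the indices $(a,k)$ as $k$, one writes the resulting operators $E_{abk}i_a^*$ as $E_{bk}:H_{in}\to H^b_{out}$ (so each $E_{bk}$ vanishes on $(H^{a}_{in})^\perp$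 for some $a$), with $\Phi(x)=\sum_{b,k}j_bE_{bk}\,x\,E_{bk}^*j_b^*$ for $x\in I$; vectors $E_{bk}\xi$ are regarded in $H_{out}$ via $j_b$, and $\theta$ of two vectors in $H_{out}$ is an element of $B(H_{out})$, here viewed in $O^{op}$. $O^{op}$ is the opposite algebra of $O$ (product $a*b=ba$). $\mathcal{M}_\Phi=H_{in}\otimes O^{op}$ is the right Hilbert $O^{op}$-module with $(\xi\otimes a)*x=\xi\otimes(a*x)$, $\langle\xi\otimes a,\eta\otimes b\rangle_{O^{op}}=\langle\xi,\eta\rangle a^**b$; $\mathcal{L}(\mathcal{M}_\Phi)\cong B(H_{in})\otimes O^{op}$. $C_\Phi$ is the $O^{op}$-linear map with $C_\Phi(e^a_j\otimes1)=\sum_i e^a_i\otimes\Phi(e^a_{ji})$. A Stinespring module related to $\Phi$ is a pair $(\mathcal{E},W)$, $\mathcal{E}$ a Hilbert $O^{op}$-module, $W$ an adjointable module map $\mathcal{M}_\Phi\to\mathcal{E}$ with $W^*W=C_\Phi$. The quantum confusability multigraph is $\tilde S_\Phi=W^*\mathcal{L}(\mathcal{E})W\subseteq B(H_{in})\otimes O^{op}$ for any Stinespring module (independent of the choice). *)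

theory Defs
  imports "HOL-Analysis.Analysis"
begin

text \<open>H_in = complex^'i, H_out = complex^'o with their
standard inner products (linear in the second variable) and standard orthonormal bases.
The direct-sum decompositions are given by block labellings bin :: 'i => 'a and
bout :: 'o => 'b: the basis vector e_r belongs to the summand with label bin r.
Operators H_m -> H_n are matrices complex^'m^'n; matrix product is **.\<close>

definition cinner :: "complex^'n \<Rightarrow> complex^'n \<Rightarrow> complex" where
  "cinner v w = (\<Sum>i\<in>UNIV. cnj (v$i) * w$i)"

definition cadj :: "complex^'n^'m \<Rightarrow> complex^'m^'n" where
  "cadj A = (\<chi> i j. cnj (A$j$i))"

text \<open>theta_{xi,eta} (eta') = <eta,eta'> xi, i.e. the matrix xi eta^*.\<close>
definition theta :: "complex^'n \<Rightarrow> complex^'n \<Rightarrow> complex^'n^'n" where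
  "theta xi eta = (\<chi> r s. xi$r * cnj (eta$s))"

definition munit :: "'n \<Rightarrow> 'n \<Rightarrow> complex^'n^'n" where
  "munit i j = theta (axis i 1) (axis j 1)"

text \<open>The block-diagonal algebra bigoplus_a B(H^a) inside B(H).\<close>
definition balg :: "('n \<Rightarrow> 'a) \<Rightarrow> (complex^'n^'n) set" where
  "balg bl = {x. \<forall>r s. bl r \<noteq> bl s \<longrightarrow> x$r$s = 0}"

text \<open>Compression Y |-> j_b j_b^* Y j_b j_b^* onto the summand with label b.\<close>
definition bcompress :: "('n \<Rightarrow> 'a) \<Rightarrow> 'a \<Rightarrow> complex^'n^'n \<Rightarrow> complex^'n^'n" where
  "bcompress bl b Y = (\<chi> r s. if bl r = b \<and> bl s = b then Y$r$s else 0)"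

definition msc :: "complex \<Rightarrow> complex^'n^'m \<Rightarrow> complex^'n^'m" where
  "msc c A = (\<chi> r s. c * A$r$s)"

definition psd :: "complex^'n^'n \<Rightarrow> bool" where
  "psd A \<longleftrightarrow> (\<forall>v. Im (cinner v (A *v v)) = 0 \<and> Re (cinner v (A *v v)) \<ge> 0)"

definition block_psd :: "nat \<Rightarrow> (nat \<Rightarrow> nat \<Rightarrow> complex^'n^'n) \<Rightarrow> bool" where
  "block_psd n x \<longleftrightarrow> (\<forall>v :: nat \<Rightarrow> complex^'n.
     Im (\<Sum>i<n. \<Sum>j<n. cinner (v i) (x i j *v v j)) = 0 \<and>
     Re (\<Sum>i<n. \<Sum>j<n. cinner (v i) (x i j *v v j)) \<ge> 0)"

definition quantum_channel ::
  "('i \<Rightarrow> 'a) \<Rightarrow> ('o \<Rightarrow> 'b) \<Rightarrow> (complex^'i^'i \<Rightarrow> complex^'o^'o) \<Rightarrow> bool" where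
  "quantum_channel bin bout \<Phi> \<longleftrightarrow>
     (\<forall>x\<in>balg bin. \<forall>y\<in>balg bin. \<forall>c. \<Phi> (x + y) = \<Phi> x + \<Phi> y \<and> \<Phi> (msc c x) = msc c (\<Phi> x)) \<and>
     (\<forall>x\<in>balg bin. \<Phi> x \<in> balg bout) \<and>
     (\<forall>x\<in>balg bin. trace (\<Phi> x) = trace x) \<and>
     (\<forall>n x. (\<forall>i j. x i j \<in> balg bin) \<longrightarrow> block_psd n x \<longrightarrow> block_psd n (\<lambda>i j. \<Phi> (x i j)))"

text \<open>K is a finite set of indices (a,b,k); the matrix
E (a,b,k) :: complex^'i^'o is j_b E_abk i_a^*, i.e. E_abk : H^a_in -> H^b_out embedded
(zero outside rows of block b and columns of block a).  For each a, b the operators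
E (a,b,k), (a,b,k) in K, are Kraus operators of x |-> j_b^* Phi(i_a x i_a^*) j_b.
After renaming (a,k) as k, E (a,b,k) is the operator E_{bk} of the paper.\<close>
definition kraus_related ::
  "('i \<Rightarrow> 'a) \<Rightarrow> ('o \<Rightarrow> 'b) \<Rightarrow> (complex^'i^'i \<Rightarrow> complex^'o^'o)
    \<Rightarrow> ('a \<times> 'b \<times> 'k) set \<Rightarrow> ('a \<times> 'b \<times> 'k \<Rightarrow> complex^'i^'o) \<Rightarrow> bool" where
  "kraus_related bin bout \<Phi> K E \<longleftrightarrow>
     finite K \<and>
     (\<forall>(a,b,k)\<in>K. \<forall>r s. E (a,b,k) $ r $ s \<noteq> 0 \<longrightarrow> bout r = b \<and> bin s = a) \<and>
     (\<forall>a b x. (\<forall>r s. x$r$s \<noteq> 0 \<longrightarrow> bin r = a \<and> bin s = a) \<longrightarrow>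
        bcompress bout b (\<Phi> x) =
          (\<Sum>k\<in>{k. (a,b,k) \<in> K}. E (a,b,k) ** x ** cadj (E (a,b,k))))"

definition opnorm :: "complex^'o^'o \<Rightarrow> real" where
  "opnorm A = onorm (\<lambda>v. A *v v)"

text \<open>Hilbert O^op-module structure on the type 'e: 'e is an abelian group, sc is the
complex scalar multiplication (making 'e a complex vector space).
act x a = x * a (right action of O^op), ip = O^op-valued inner product.  Products in
O^op are written through products in O: a * b (in O^op) = b ** a.\<close>
definition hilbert_opmod ::
  "('o \<Rightarrow> 'b) \<Rightarrow> (complex \<Rightarrow> 'e::ab_group_add \<Rightarrow> 'e) \<Rightarrow> ('e \<Rightarrow> complex^'o^'o \<Rightarrow> 'e)
     \<Rightarrow> ('e \<Rightarrow> 'e \<Rightarrow> complex^'o^'o) \<Rightarrow> bool" where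
  "hilbert_opmod bout sc act ip \<longleftrightarrow>
     (\<forall>c x y. sc c (x + y) = sc c x + sc c y) \<and>
     (\<forall>c d x. sc (c + d) x = sc c x + sc d x) \<and>
     (\<forall>c d x. sc c (sc d x) = sc (c * d) x) \<and>
     (\<forall>x. sc 1 x = x) \<and>
     (\<forall>x y a. a \<in> balg bout \<longrightarrow> act (x + y) a = act x a + act y a) \<and>
     (\<forall>x a b. a \<in> balg bout \<longrightarrow> b \<in> balg bout \<longrightarrow> act x (a + b) = act x a + act x b) \<and>
     (\<forall>x a c. a \<in> balg bout \<longrightarrow> act (sc c x) a = sc c (act x a) \<and> act x (msc c a) = sc c (act x a)) \<and>
     (\<forall>x a b. a \<in> balg bout \<longrightarrow> b \<in> balg bout \<longrightarrow> act (act x a) b = act x (b ** a)) \<and>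
     (\<forall>x. act x (mat 1) = x) \<and>
     (\<forall>x y. ip x y \<in> balg bout) \<and>
     (\<forall>x y z. ip x (y + z) = ip x y + ip x z) \<and>
     (\<forall>x y c. ip x (sc c y) = msc c (ip x y)) \<and>
     (\<forall>x y a. a \<in> balg bout \<longrightarrow> ip x (act y a) = a ** ip x y) \<and>
     (\<forall>x y. ip y x = cadj (ip x y)) \<and>
     (\<forall>x. psd (ip x x)) \<and>
     (\<forall>x. ip x x = 0 \<longrightarrow> x = 0) \<and>
     (\<forall>s :: nat \<Rightarrow> 'e.
        (\<forall>e>0. \<exists>N. \<forall>m\<ge>N. \<forall>n\<ge>N. sqrt (opnorm (ip (s m - s n) (s m - s n))) < e) \<longrightarrow>
        (\<exists>x. \<forall>e>0. \<exists>N. \<forall>n\<ge>N. sqrt (opnorm (ip (s n - x) (s n - x))) < e))"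

definition adjoint_pair ::
  "'x set \<Rightarrow> 'y set \<Rightarrow> ('x \<Rightarrow> 'x \<Rightarrow> 'r) \<Rightarrow> ('y \<Rightarrow> 'y \<Rightarrow> 'r) \<Rightarrow> ('x \<Rightarrow> 'y) \<Rightarrow> ('y \<Rightarrow> 'x) \<Rightarrow> bool" where
  "adjoint_pair A B ipA ipB T T' \<longleftrightarrow>
     (\<forall>x\<in>A. T x \<in> B) \<and> (\<forall>y\<in>B. T' y \<in> A) \<and> (\<forall>x\<in>A. \<forall>y\<in>B. ipB (T x) y = ipA x (T' y))"

text \<open>The module M_Phi = H_in (x) O^op: an element sum_i e_i (x) v_i is represented by
v :: 'i => O.  (xi (x) a) * x = xi (x) (x ** a);  <v,w> = sum_i w_i ** v_i^*.\<close>
definition Mcar :: "('o \<Rightarrow> 'b) \<Rightarrow> ('i \<Rightarrow> complex^'o^'o) set" where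
  "Mcar bout = {v. \<forall>i. v i \<in> balg bout}"

definition Mip :: "('i \<Rightarrow> complex^'o^'o) \<Rightarrow> ('i \<Rightarrow> complex^'o^'o) \<Rightarrow> complex^'o^'o" where
  "Mip v w = (\<Sum>i\<in>UNIV. w i ** cadj (v i))"

text \<open>Elements of B(H_in) (x) O^op are written X = sum_{i,j} e_{ij} (x) X i j, X i j in O;
they act on M_Phi by  (X v)_i = sum_j X i j * v j (product in O^op) = sum_j v j ** X i j.\<close>
definition opX :: "('i \<Rightarrow> 'i \<Rightarrow> complex^'o^'o) \<Rightarrow> ('i \<Rightarrow> complex^'o^'o) \<Rightarrow> ('i \<Rightarrow> complex^'o^'o)" where
  "opX X v = (\<lambda>i. \<Sum>j\<in>UNIV. v j ** X i j)"

text \<open>C_Phi (e_j (x) 1) = sum_{i in the block of j} e_i (x) Phi(e_{ji}).\<close>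
definition Cmat :: "('i \<Rightarrow> 'a) \<Rightarrow> (complex^'i^'i \<Rightarrow> complex^'o^'o) \<Rightarrow> 'i \<Rightarrow> 'i \<Rightarrow> complex^'o^'o" where
  "Cmat bin \<Phi> i j = (if bin i = bin j then \<Phi> (munit j i) else 0)"

definition stinespring_module ::
  "('i \<Rightarrow> 'a) \<Rightarrow> ('o \<Rightarrow> 'b) \<Rightarrow> (complex^'i^'i \<Rightarrow> complex^'o^'o)
    \<Rightarrow> (complex \<Rightarrow> 'e::ab_group_add \<Rightarrow> 'e) \<Rightarrow> ('e \<Rightarrow> complex^'o^'o \<Rightarrow> 'e)
    \<Rightarrow> ('e \<Rightarrow> 'e \<Rightarrow> complex^'o^'o) \<Rightarrow> (('i \<Rightarrow> complex^'o^'o) \<Rightarrow> 'e) \<Rightarrow> bool" where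
  "stinespring_module bin bout \<Phi> sc act ip W \<longleftrightarrow>
     hilbert_opmod bout sc act ip \<and>
     (\<exists>W'. adjoint_pair (Mcar bout) UNIV Mip ip W W' \<and>
           (\<forall>v\<in>Mcar bout. W' (W v) = opX (Cmat bin \<Phi>) v))"

text \<open>W^* L(E) W, as a subset of B(H_in) (x) O^op.\<close>
definition confus_multigraph_of ::
  "('o \<Rightarrow> 'b) \<Rightarrow> ('e \<Rightarrow> 'e \<Rightarrow> complex^'o^'o) \<Rightarrow> (('i \<Rightarrow> complex^'o^'o) \<Rightarrow> 'e)
    \<Rightarrow> ('i \<Rightarrow> 'i \<Rightarrow> complex^'o^'o) set" where
  "confus_multigraph_of bout ip W =
     {X. (\<forall>i j. X i j \<in> balg bout) \<and>
         (\<exists>T T' W'. adjoint_pair UNIV UNIV ip ip T T' \<and>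
            adjoint_pair (Mcar bout) UNIV Mip ip W W' \<and>
            (\<forall>v\<in>Mcar bout. W' (T (W v)) = opX X v))}"

definition span_fam :: "'p set \<Rightarrow> ('p \<Rightarrow> 'i \<Rightarrow> 'i \<Rightarrow> complex^'o^'o) \<Rightarrow> ('i \<Rightarrow> 'i \<Rightarrow> complex^'o^'o) set" where
  "span_fam P G = {X. \<exists>c. X = (\<lambda>i j. \<Sum>p\<in>P. msc (c p) (G p i j))}"

end

theory Submission
  imports Defs
begin

text \<open>
  Write \<open>w\<^sub>j = W (e\<^sub>j \<otimes> 1)\<close>. Every element of \<open>W\<^sup>* L(E) W\<close> is the matrix
  \<open>(\<langle>w\<^sub>i, T w\<^sub>j\<rangle>)\<^sub>i\<^sub>j\<close> of an adjointable \<open>T\<close>, and \<open>\<langle>w\<^sub>i, w\<^sub>j\<rangle>\<close> is the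
  \<open>(i,j)\<close> entry of \<open>C\<^sub>\<Phi> = \<Sum>\<^sub>m \<theta>(E\<^sub>m e\<^sub>j, E\<^sub>m e\<^sub>i)\<close>.
  The quadratic form of \<open>C\<^sub>\<Phi>\<close> is \<open>\<Sum>\<^sub>m |\<Sum>\<^sub>j z\<^sub>j E\<^sub>m e\<^sub>j|\<^sup>2\<close>, so every vector orthogonal to its
  kernel, in particular \<open>(\<theta>(e\<^sub>r, E\<^sub>m e\<^sub>i))\<^sub>i\<close> for an index \<open>r\<close> in the output block of \<open>m\<close>,
  lies in its range. Pulling these back along \<open>W\<close> gives \<open>y\<^sub>m\<close> with
  \<open>\<langle>y\<^sub>m, w\<^sub>j\<rangle> = \<theta>(E\<^sub>m e\<^sub>j, e\<^sub>r)\<close>, and \<open>w\<^sub>j = \<Sum>\<^sub>m y\<^sub>m \<theta>(E\<^sub>m e\<^sub>j, e\<^sub>r)\<close>.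
  Expanding \<open>\<langle>w\<^sub>i, T w\<^sub>j\<rangle>\<close> with this identity exhibits every element of \<open>W\<^sup>* L(E) W\<close>
  as a combination of the \<open>\<theta>(E\<^sub>m\<^sub>' e\<^sub>j, E\<^sub>m e\<^sub>i)\<close> with \<open>m, m'\<close> in the same output block
  (the other coefficients are off-diagonal entries of a block-diagonal matrix), and conversely
  the rank-one operators \<open>z \<mapsto> y\<^sub>m \<langle>y\<^sub>m\<^sub>', z\<rangle>\<close> produce each of these generators.
\<close>

lemma theta_nth [simp]: "theta u v $ r $ s = u $ r * cnj (v $ s)"
  by (simp add: theta_def)

lemma cadj_nth [simp]: "cadj A $ i $ j = cnj (A $ j $ i)"
  by (simp add: cadj_def)

lemma msc_nth [simp]: "msc c A $ i $ j = c * A $ i $ j"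
  by (simp add: msc_def)

lemma matrix_vector_mult_axis_nth [simp]: "((A::complex^'n^'m) *v axis j 1) $ r = A $ r $ j"
  by (simp add: matrix_vector_mult_def axis_def if_distrib cong: if_cong)

lemma cadj_zero [simp]: "cadj 0 = 0"
  by (simp add: vec_eq_iff)

lemma cadj_mat1 [simp]: "cadj (mat 1 :: complex^'n^'n) = mat 1"
  by (simp add: vec_eq_iff mat_def)

lemma cadj_add: "cadj (A + B) = cadj A + cadj B"
  by (simp add: vec_eq_iff)

lemma cadj_sum: "cadj (sum f S) = (\<Sum>x\<in>S. cadj (f x))"
  by (induct S rule: infinite_finite_induct) (auto simp: cadj_add)

lemma cadj_matrix_mult: "cadj ((A::complex^'n^'m) ** (B::complex^'k^'n)) = cadj B ** cadj A"
  by (simp add: vec_eq_iff matrix_matrix_mult_def mult.commute)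

lemma cadj_msc: "cadj (msc c A) = msc (cnj c) (cadj A)"
  by (simp add: vec_eq_iff)

lemma cadj_theta: "cadj (theta u v) = theta v u"
  by (simp add: vec_eq_iff mult.commute)

lemma matrix_add_rdistrib: "(B + C) ** A = B ** A + C ** A"
  by (vector matrix_matrix_mult_def sum.distrib[symmetric] field_simps)

lemma matrix_mult_sum_right: "(A::complex^'n^'m) ** sum f S = (\<Sum>k\<in>S. A ** f k)"
  by (induct S rule: infinite_finite_induct) (auto simp: matrix_add_ldistrib)

lemma matrix_mult_sum_left: "sum f S ** (A::complex^'n^'m) = (\<Sum>k\<in>S. f k ** A)"
  by (induct S rule: infinite_finite_induct) (auto simp: matrix_add_rdistrib)

lemma theta_sum_left: "theta (sum u S) v = (\<Sum>k\<in>S. theta (u k) v)"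
  by (induct S rule: infinite_finite_induct) (auto simp: vec_eq_iff algebra_simps)

lemma matrix_mult_theta: "(A::complex^'n^'n) ** theta u v = theta (A *v u) v"
  by (simp add: vec_eq_iff matrix_matrix_mult_def matrix_vector_mult_def sum_distrib_left
      sum_distrib_right mult_ac)

lemma cnj_axis_nth [simp]: "cnj (axis r (1::complex) $ k) = axis r 1 $ k"
  by (simp add: axis_def)

lemma axis_nth_mult: "axis r (1::complex) $ k * x = (if k = r then x else 0)"
  by (simp add: axis_def)

lemma mult_axis_nth: "x * axis r (1::complex) $ k = (if k = r then x else 0)"
  by (simp add: axis_def)

lemma theta_axis_mult_theta: "theta u (axis r 1) ** theta (axis r 1) v = theta u v"
  by (simp add: vec_eq_iff matrix_matrix_mult_def mult.assoc axis_nth_mult mult_axis_nth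
      if_distrib[of "\<lambda>x. x * _"] if_distrib[of "\<lambda>x. _ * x"] cong: if_cong)

lemma theta_axis_mult_mult_theta:
  "theta u (axis r 1) ** Z ** theta (axis s 1) v = msc (Z $ r $ s) (theta u v)"
  by (simp add: vec_eq_iff matrix_matrix_mult_def sum_distrib_left sum_distrib_right mult.assoc
      axis_nth_mult mult_axis_nth if_distrib[of "\<lambda>x. x * _"] if_distrib[of "\<lambda>x. _ * x"]
      cong: if_cong)

lemma munit_nth: "munit j i $ n $ k = (if n = j then if k = i then 1 else 0 else (0::complex))"
  by (simp add: munit_def axis_def)

lemma matrix_mult_munit_cadj:
  "(E::complex^'i^'o) ** munit j i ** cadj E = theta (E *v axis j 1) (E *v axis i 1)"
  by (simp add: vec_eq_iff matrix_matrix_mult_def munit_nth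
      if_distrib[of "\<lambda>x. x * _"] if_distrib[of "\<lambda>x. _ * x"] cong: if_cong)

lemma balg_iff: "x \<in> balg bl \<longleftrightarrow> (\<forall>r s. bl r \<noteq> bl s \<longrightarrow> x $ r $ s = 0)"
  by (simp add: balg_def)

lemma balg_zero [simp]: "0 \<in> balg bl"
  by (simp add: balg_iff)

lemma balg_mat1 [simp]: "mat 1 \<in> balg bl"
  by (simp add: balg_iff mat_def)

lemma balg_add [simp]: "x \<in> balg bl \<Longrightarrow> y \<in> balg bl \<Longrightarrow> x + y \<in> balg bl"
  by (simp add: balg_iff)

lemma balg_msc [simp]: "x \<in> balg bl \<Longrightarrow> msc c x \<in> balg bl"
  by (simp add: balg_iff)

lemma balg_scaleR [simp]: "x \<in> balg bl \<Longrightarrow> c *\<^sub>R x \<in> balg bl"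
  by (simp add: balg_iff)

lemma balg_sum: "(\<And>k. k \<in> S \<Longrightarrow> f k \<in> balg bl) \<Longrightarrow> sum f S \<in> balg bl"
  by (induct S rule: infinite_finite_induct) auto

lemma balg_matrix_mult [simp]:
  assumes "x \<in> balg bl" "y \<in> balg bl"
  shows "x ** y \<in> balg bl"
  unfolding balg_iff
proof (intro allI impI)
  fix r s assume "bl r \<noteq> bl s"
  then have "x $ r $ k * y $ k $ s = 0" for k
    using assms by (cases "bl r = bl k") (auto simp: balg_iff)
  then show "(x ** y) $ r $ s = 0"
    by (simp add: matrix_matrix_mult_def sum.neutral)
qed

definition supported_in :: "('n \<Rightarrow> 'a) \<Rightarrow> 'a \<Rightarrow> complex^'n \<Rightarrow> bool" where
  "supported_in bl \<beta> u \<longleftrightarrow> (\<forall>r. u $ r \<noteq> 0 \<longrightarrow> bl r = \<beta>)"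

lemma theta_balg: "supported_in bl \<beta> u \<Longrightarrow> supported_in bl \<beta> v \<Longrightarrow> theta u v \<in> balg bl"
  by (auto simp: balg_def supported_in_def)

lemma supported_in_axis: "supported_in bl (bl r) (axis r 1)"
  by (simp add: supported_in_def axis_def)

subsection \<open>Hilbert modules over the opposite algebra\<close>

locale hilbert_opmodule =
  fixes bout :: "'o::finite \<Rightarrow> 'b"
    and sc :: "complex \<Rightarrow> 'e::ab_group_add \<Rightarrow> 'e"
    and act :: "'e \<Rightarrow> complex^'o^'o \<Rightarrow> 'e"
    and ip :: "'e \<Rightarrow> 'e \<Rightarrow> complex^'o^'o"
  assumes hilbert: "hilbert_opmod bout sc act ip"
begin

lemma act_add_left: "a \<in> balg bout \<Longrightarrow> act (x + y) a = act x a + act y a"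
  using hilbert unfolding hilbert_opmod_def by (elim conjE) metis

lemma act_add_right: "a \<in> balg bout \<Longrightarrow> b \<in> balg bout \<Longrightarrow> act x (a + b) = act x a + act x b"
  using hilbert unfolding hilbert_opmod_def by (elim conjE) metis

lemma act_act: "a \<in> balg bout \<Longrightarrow> b \<in> balg bout \<Longrightarrow> act (act x a) b = act x (b ** a)"
  using hilbert unfolding hilbert_opmod_def by (elim conjE) metis

lemma ip_balg [simp]: "ip x y \<in> balg bout"
  using hilbert unfolding hilbert_opmod_def by (elim conjE) metis

lemma ip_add_right: "ip x (y + z) = ip x y + ip x z"
  using hilbert unfolding hilbert_opmod_def by (elim conjE) metis

lemma ip_sc_right: "ip x (sc c y) = msc c (ip x y)"
  using hilbert unfolding hilbert_opmod_def by (elim conjE) metis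

lemma ip_act_right: "a \<in> balg bout \<Longrightarrow> ip x (act y a) = a ** ip x y"
  using hilbert unfolding hilbert_opmod_def by (elim conjE) metis

lemma ip_commute: "ip y x = cadj (ip x y)"
  using hilbert unfolding hilbert_opmod_def by (elim conjE) metis

lemma cadj_ip [simp]: "cadj (ip x y) = ip y x"
  by (rule ip_commute[symmetric])

lemma ip_self_eq_0D: "ip x x = 0 \<Longrightarrow> x = 0"
  using hilbert unfolding hilbert_opmod_def by (elim conjE) metis

lemma ip_add_left: "ip (x + y) z = ip x z + ip y z"
  by (metis cadj_ip ip_add_right cadj_add)

lemma ip_zero_right [simp]: "ip x 0 = 0"
  using ip_add_right[of x 0 0] by simp

lemma ip_zero_left [simp]: "ip 0 x = 0"
  using ip_add_left[of 0 0 x] by simp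

lemma ip_sum_right: "ip x (sum f S) = (\<Sum>k\<in>S. ip x (f k))"
  by (induct S rule: infinite_finite_induct) (auto simp: ip_add_right)

lemma ip_sum_left: "ip (sum f S) z = (\<Sum>k\<in>S. ip (f k) z)"
  by (induct S rule: infinite_finite_induct) (auto simp: ip_add_left)

lemma ip_diff_left: "ip (x - y) z = ip x z - ip y z"
  using ip_add_left[of "x - y" y z] by (simp add: algebra_simps)

lemma ip_diff_right: "ip z (x - y) = ip z x - ip z y"
  using ip_add_right[of z "x - y" y] by (simp add: algebra_simps)

lemma ip_act_left: "a \<in> balg bout \<Longrightarrow> ip (act x a) y = ip x y ** cadj a"
  by (subst ip_commute) (simp add: ip_act_right cadj_matrix_mult)

lemma ip_sc_left: "ip (sc c x) y = msc (cnj c) (ip x y)"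
  by (subst ip_commute) (simp add: ip_sc_right cadj_msc)

lemma ip_diff_self_eq_0D: "ip (x - y) (x - y) = 0 \<Longrightarrow> x = y"
  using ip_self_eq_0D[of "x - y"] by simp

lemma ip_eqI: "(\<And>z. ip x z = ip y z) \<Longrightarrow> x = y"
  by (rule ip_diff_self_eq_0D) (simp add: ip_diff_left)

lemma act_zero_left: "a \<in> balg bout \<Longrightarrow> act 0 a = 0"
  using act_add_left[of a 0 0] by simp

lemma act_zero_right [simp]: "act x 0 = 0"
  using act_add_right[of 0 0 x] by simp

lemma act_sum_left: "a \<in> balg bout \<Longrightarrow> act (sum f S) a = (\<Sum>k\<in>S. act (f k) a)"
  by (induct S rule: infinite_finite_induct) (auto simp: act_add_left act_zero_left)

lemma act_sum_right:
  "(\<And>k. k \<in> S \<Longrightarrow> f k \<in> balg bout) \<Longrightarrow> act x (sum f S) = (\<Sum>k\<in>S. act x (f k))"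
  by (induct S rule: infinite_finite_induct) (auto simp: act_add_right balg_sum)

abbreviation adjointable :: "('e \<Rightarrow> 'e) \<Rightarrow> ('e \<Rightarrow> 'e) \<Rightarrow> bool" where
  "adjointable T T' \<equiv> adjoint_pair UNIV UNIV ip ip T T'"

lemma adjointable_left: "adjointable T T' \<Longrightarrow> ip (T x) z = ip x (T' z)"
  by (simp add: adjoint_pair_def)

lemma adjointable_right: "adjointable T T' \<Longrightarrow> ip x (T z) = ip (T' x) z"
  by (metis adjointable_left cadj_ip)

lemma adjointable_module_map:
  assumes adj: "adjointable T T'" and a: "\<And>k. k \<in> S \<Longrightarrow> a k \<in> balg bout"
  shows "T (\<Sum>k\<in>S. act (u k) (a k)) = (\<Sum>k\<in>S. act (T (u k)) (a k))"
proof (rule ip_eqI)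
  fix z
  have "ip (T (\<Sum>k\<in>S. act (u k) (a k))) z = (\<Sum>k\<in>S. ip (u k) (T' z) ** cadj (a k))"
    using a by (simp add: adjointable_left[OF adj] ip_sum_left ip_act_left)
  also have "\<dots> = ip (\<Sum>k\<in>S. act (T (u k)) (a k)) z"
    using a by (simp add: adjointable_left[OF adj] ip_sum_left ip_act_left)
  finally show "ip (T (\<Sum>k\<in>S. act (u k) (a k))) z = ip (\<Sum>k\<in>S. act (T (u k)) (a k)) z" .
qed

lemma adjointable_rank_one: "adjointable (\<lambda>z. act x (ip y z)) (\<lambda>z. act y (ip x z))"
  by (simp add: adjoint_pair_def ip_act_left ip_act_right)

lemma adjointable_lincomb:
  assumes "\<And>p. p \<in> P \<Longrightarrow> adjointable (T p) (T' p)"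
  shows "adjointable (\<lambda>z. \<Sum>p\<in>P. sc (c p) (T p z)) (\<lambda>z. \<Sum>p\<in>P. sc (cnj (c p)) (T' p z))"
  using assms by (simp add: adjoint_pair_def ip_sum_left ip_sum_right ip_sc_left ip_sc_right)

end

subsection \<open>The Kraus form of \<open>C\<^sub>\<Phi>\<close>\<close>

lemma kraus_related_finite: "kraus_related bin bout \<Phi> K E \<Longrightarrow> finite K"
  by (simp add: kraus_related_def)

lemma kraus_related_support:
  assumes "kraus_related bin bout \<Phi> K E" "m \<in> K" "E m $ r $ s \<noteq> 0"
  shows "bout r = fst (snd m) \<and> bin s = fst m"
  using assms unfolding kraus_related_def by (cases m) fastforce

lemma kraus_related_compress:
  assumes "kraus_related bin bout \<Phi> K E"
    and "\<And>r s. x $ r $ s \<noteq> 0 \<Longrightarrow> bin r = a \<and> bin s = a"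
  shows "bcompress bout b (\<Phi> x) = (\<Sum>k\<in>{k. (a, b, k) \<in> K}. E (a, b, k) ** x ** cadj (E (a, b, k)))"
  using assms unfolding kraus_related_def by blast

lemma quantum_channel_balg:
  "quantum_channel bin bout \<Phi> \<Longrightarrow> x \<in> balg bin \<Longrightarrow> \<Phi> x \<in> balg bout"
  by (simp add: quantum_channel_def)

lemma kraus_sum_nth_restrict:
  assumes KR: "kraus_related bin bout \<Phi> K E"
  shows "(\<Sum>m\<in>K. E m $ r $ j * cnj (E m $ s $ i)) =
    (\<Sum>k\<in>{k. (bin j, bout r, k) \<in> K}.
       E (bin j, bout r, k) $ r $ j * cnj (E (bin j, bout r, k) $ s $ i))"
proof -
  let ?h = "\<lambda>m. E m $ r $ j * cnj (E m $ s $ i)"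
  let ?K = "{m \<in> K. fst m = bin j \<and> fst (snd m) = bout r}"
  have "sum ?h K = sum ?h ?K"
  proof (rule sum.mono_neutral_right)
    show "finite K"
      using KR by (rule kraus_related_finite)
    show "\<forall>m\<in>K - ?K. ?h m = 0"
      using kraus_related_support[OF KR] by fastforce
  qed auto
  also have "?K = (\<lambda>k. (bin j, bout r, k)) ` {k. (bin j, bout r, k) \<in> K}"
    by (auto simp: image_iff prod_eq_iff)
  also have "sum ?h \<dots> = (\<Sum>k\<in>{k. (bin j, bout r, k) \<in> K}. ?h (bin j, bout r, k))"
    by (subst sum.reindex) (auto simp: inj_on_def)
  finally show ?thesis .
qed

lemma kraus_sum_nth_eq_0:
  assumes KR: "kraus_related bin bout \<Phi> K E" and "bin i \<noteq> bin j \<or> bout r \<noteq> bout s"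
  shows "(\<Sum>m\<in>K. E m $ r $ j * cnj (E m $ s $ i)) = 0"
proof (rule sum.neutral, intro ballI)
  fix m assume m: "m \<in> K"
  show "E m $ r $ j * cnj (E m $ s $ i) = 0"
  proof (rule ccontr)
    assume "E m $ r $ j * cnj (E m $ s $ i) \<noteq> 0"
    then have "E m $ r $ j \<noteq> 0" "E m $ s $ i \<noteq> 0"
      by auto
    then show False
      using kraus_related_support[OF KR m] assms(2) by metis
  qed
qed

lemma Cmat_kraus:
  assumes QC: "quantum_channel bin bout \<Phi>" and KR: "kraus_related bin bout \<Phi> K E"
  shows "Cmat bin \<Phi> i j = (\<Sum>m\<in>K. theta (E m *v axis j 1) (E m *v axis i 1))"
proof -
  have munit_support: "munit j i $ r $ s \<noteq> 0 \<Longrightarrow> bin r = bin j \<and> bin s = bin j"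
    if "bin i = bin j" for r s
    using that by (simp add: munit_nth split: if_splits)
  have "Cmat bin \<Phi> i j $ r $ s = (\<Sum>m\<in>K. E m $ r $ j * cnj (E m $ s $ i))" for r s
  proof (cases "bin i = bin j \<and> bout r = bout s")
    case True
    then have "Cmat bin \<Phi> i j $ r $ s = bcompress bout (bout r) (\<Phi> (munit j i)) $ r $ s"
      by (simp add: Cmat_def bcompress_def)
    also have "\<dots> = (\<Sum>k\<in>{k. (bin j, bout r, k) \<in> K}.
        (E (bin j, bout r, k) ** munit j i ** cadj (E (bin j, bout r, k))) $ r $ s)"
      using kraus_related_compress[OF KR munit_support] True by simp
    also have "\<dots> = (\<Sum>m\<in>K. E m $ r $ j * cnj (E m $ s $ i))"
      by (simp add: matrix_mult_munit_cadj kraus_sum_nth_restrict[OF KR])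
    finally show ?thesis .
  next
    case False
    have "munit j i \<in> balg bin" if "bin i = bin j"
      unfolding balg_iff using munit_support[OF that] by metis
    then have "\<Phi> (munit j i) \<in> balg bout" if "bin i = bin j"
      using that by (blast intro: quantum_channel_balg[OF QC])
    then have "Cmat bin \<Phi> i j $ r $ s = 0"
      using False by (auto simp: Cmat_def balg_iff)
    then show ?thesis
      using kraus_sum_nth_eq_0[OF KR] False by simp
  qed
  then show ?thesis
    by (simp add: vec_eq_iff)
qed

subsection \<open>The range of \<open>C\<^sub>\<Phi>\<close>\<close>

lemma orthogonal_isotropic_imp_in_image:
  fixes L :: "'v::euclidean_space \<Rightarrow> 'v"
  assumes L: "linear L" and V: "subspace V" "L ` V \<subseteq> V" and v: "v \<in> V"
    and orth: "\<And>z. z \<in> V \<Longrightarrow> inner z (L z) = 0 \<Longrightarrow> inner v z = 0"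
  shows "v \<in> L ` V"
proof -
  have LV: "subspace (L ` V)"
    using L V(1) by (rule linear_subspace_image)
  obtain y z where y: "y \<in> span (L ` V)" and z: "\<And>w. w \<in> span (L ` V) \<Longrightarrow> orthogonal z w"
    and v_eq: "v = y + z"
    using orthogonal_subspace_decomp_exists[of "L ` V" v] by blast
  have "y \<in> L ` V"
    using y LV by (metis span_eq_iff)
  then have "z \<in> V"
    using v_eq V v subspace_diff[OF V(1) v, of y] by auto
  then have "inner z (L z) = 0"
    using z[of "L z"] by (simp add: orthogonal_def span_base)
  then have "inner v z = 0"
    by (rule orth[OF \<open>z \<in> V\<close>])
  moreover have "inner y z = 0"
    using z[OF y] by (simp add: orthogonal_def inner_commute)
  ultimately have "z = 0"
    using v_eq by (simp add: inner_add_left)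
  then show ?thesis
    using v_eq \<open>y \<in> L ` V\<close> by simp
qed

definition frob :: "('i::finite \<Rightarrow> complex^'o::finite^'o) \<Rightarrow> ('i \<Rightarrow> complex^'o^'o) \<Rightarrow> complex" where
  "frob X Y = (\<Sum>i\<in>UNIV. \<Sum>r\<in>UNIV. \<Sum>s\<in>UNIV. cnj (X i $ r $ s) * Y i $ r $ s)"

lemma inner_vec_lambda_frob: "inner (vec_lambda X) (vec_lambda Y) = Re (frob X Y)"
  by (simp add: frob_def inner_vec_def inner_complex_def Re_sum)

lemma frob_sum_right: "frob X (\<lambda>i. \<Sum>m\<in>K. Y m i) = (\<Sum>m\<in>K. frob X (Y m))"
  by (simp add: frob_def sum_distrib_left sum.swap[of _ K])

lemma frob_commute: "frob Y X = cnj (frob X Y)"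
  by (simp add: frob_def mult.commute)

lemma frob_theta_right:
  "frob z (\<lambda>i. theta u (F i)) = (\<Sum>r\<in>UNIV. u $ r * cnj ((\<Sum>i\<in>UNIV. z i *v F i) $ r))"
proof -
  have "frob z (\<lambda>i. theta u (F i)) =
      (\<Sum>i\<in>UNIV. \<Sum>r\<in>UNIV. \<Sum>s\<in>UNIV. u $ r * cnj (z i $ r $ s * F i $ s))"
    by (simp add: frob_def mult_ac)
  also have "\<dots> = (\<Sum>r\<in>UNIV. \<Sum>i\<in>UNIV. \<Sum>s\<in>UNIV. u $ r * cnj (z i $ r $ s * F i $ s))"
    by (rule sum.swap)
  also have "\<dots> = (\<Sum>r\<in>UNIV. u $ r * cnj ((\<Sum>i\<in>UNIV. z i *v F i) $ r))"
    by (simp add: sum_distrib_left matrix_vector_mult_def)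
  finally show ?thesis .
qed

lemma opX_kraus:
  assumes "\<And>i j. C i j = (\<Sum>m\<in>K. theta (f m j) (f m i))"
  shows "opX C z = (\<lambda>i. \<Sum>m\<in>K. theta (\<Sum>j\<in>UNIV. z j *v f m j) (f m i))"
proof
  fix i
  have "opX C z i = (\<Sum>j\<in>UNIV. \<Sum>m\<in>K. theta (z j *v f m j) (f m i))"
    by (simp add: opX_def assms matrix_mult_sum_right matrix_mult_theta)
  also have "\<dots> = (\<Sum>m\<in>K. theta (\<Sum>j\<in>UNIV. z j *v f m j) (f m i))"
    by (subst sum.swap) (simp add: theta_sum_left)
  finally show "opX C z i = (\<Sum>m\<in>K. theta (\<Sum>j\<in>UNIV. z j *v f m j) (f m i))" .
qed

lemma frob_opX_kraus:
  assumes "\<And>i j. C i j = (\<Sum>m\<in>K. theta (f m j) (f m i))"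
  shows "frob z (opX C z) =
    (\<Sum>m\<in>K. \<Sum>r\<in>UNIV. (\<Sum>j\<in>UNIV. z j *v f m j) $ r * cnj ((\<Sum>j\<in>UNIV. z j *v f m j) $ r))"
  by (simp only: opX_kraus[OF assms] frob_sum_right frob_theta_right)

lemma Re_square_add_Im_square: "Re a * Re a + Im a * Im a = (cmod a)\<^sup>2"
  by (subst cmod_power2) (simp add: power2_eq_square)

text \<open>\<open>C\<close> is positive with quadratic form \<open>\<Sum>\<^sub>m |\<Sum>\<^sub>j z\<^sub>j f\<^sub>m\<^sub>j|\<^sup>2\<close>, and the target is
  orthogonal to every \<open>z\<close> with \<open>\<Sum>\<^sub>j z\<^sub>j f\<^sub>m\<^sub>0\<^sub>j = 0\<close>, hence to the kernel of \<open>C\<close>.\<close>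

lemma opX_kraus_image:
  fixes f :: "'k \<Rightarrow> 'i::finite \<Rightarrow> complex^'o::finite"
  assumes K: "finite K" "m0 \<in> K"
    and C: "\<And>i j. C i j = (\<Sum>m\<in>K. theta (f m j) (f m i))" "\<And>i j. C i j \<in> balg bout"
    and v: "\<And>i. theta g (f m0 i) \<in> balg bout"
  shows "\<exists>x\<in>Mcar bout. opX C x = (\<lambda>i. theta g (f m0 i))"
proof -
  define L :: "complex^'o^'o^'i \<Rightarrow> complex^'o^'o^'i" where "L X = (\<chi> i. opX C (($) X) i)" for X
  define V :: "(complex^'o^'o^'i) set" where "V = {X. \<forall>i. X $ i \<in> balg bout}"
  define v where "v = (\<chi> i. theta g (f m0 i))"
  have "linear L"
    by (rule linearI) (simp_all add: L_def opX_def vec_eq_iff matrix_add_rdistrib sum.distrib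
        scalar_matrix_assoc[symmetric] scaleR_sum_right)
  moreover have "subspace V"
    by (auto simp: subspace_def V_def)
  moreover have "L ` V \<subseteq> V"
    using C(2) by (auto simp: V_def L_def opX_def intro!: balg_sum)
  moreover have "v \<in> V"
    using v by (simp add: V_def v_def)
  moreover have "inner v Z = 0" if "inner Z (L Z) = 0" for Z
  proof -
    define R where "R m = (\<Sum>j\<in>UNIV. Z $ j *v f m j)" for m
    have "inner Z (L Z) = Re (frob (($) Z) (opX C (($) Z)))"
      by (simp add: L_def inner_vec_lambda_frob[symmetric])
    also have "\<dots> = Re (\<Sum>m\<in>K. \<Sum>r\<in>UNIV. R m $ r * cnj (R m $ r))"
      by (simp only: frob_opX_kraus[OF C(1)] R_def)
    also have "\<dots> = (\<Sum>m\<in>K. \<Sum>r\<in>UNIV. (cmod (R m $ r))\<^sup>2)"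
      by (simp add: Re_square_add_Im_square)
    finally have "(\<Sum>m\<in>K. \<Sum>r\<in>UNIV. (cmod (R m $ r))\<^sup>2) = 0"
      using that by simp
    then have "(\<Sum>r\<in>UNIV. (cmod (R m0 $ r))\<^sup>2) = 0"
      using K by (simp add: sum_nonneg_eq_0_iff sum_nonneg)
    then have "R m0 = 0"
      by (simp add: sum_nonneg_eq_0_iff vec_eq_iff)
    have "inner v Z = Re (frob (\<lambda>i. theta g (f m0 i)) (($) Z))"
      by (simp add: v_def inner_vec_lambda_frob[symmetric])
    also have "\<dots> = Re (cnj (frob (($) Z) (\<lambda>i. theta g (f m0 i))))"
      by (subst frob_commute) (rule refl)
    also have "\<dots> = 0"
      using \<open>R m0 = 0\<close> by (simp add: frob_theta_right R_def[symmetric])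
    finally show ?thesis .
  qed
  ultimately have "v \<in> L ` V"
    by (intro orthogonal_isotropic_imp_in_image)
  then obtain X where "X \<in> V" "L X = v"
    by blast
  then have "($) X \<in> Mcar bout" "opX C (($) X) = (\<lambda>i. theta g (f m0 i))"
    by (auto simp: Mcar_def V_def L_def v_def vec_eq_iff)
  then show ?thesis
    by blast
qed

subsection \<open>Confusability in a Stinespring module\<close>

definition Mbasis :: "'i \<Rightarrow> 'i \<Rightarrow> complex^'o^'o" where
  "Mbasis j = (\<lambda>t. if t = j then mat 1 else 0)"

lemma Mbasis_Mcar: "Mbasis j \<in> Mcar bout"
  by (simp add: Mcar_def Mbasis_def)

lemma Mip_Mbasis: "Mip (Mbasis i) (z :: 'i::finite \<Rightarrow> complex^'o^'o) = z i"
  by (simp add: Mip_def Mbasis_def if_distrib if_distribR cong: if_cong)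

lemma opX_Mbasis: "opX X (Mbasis (j::'i::finite) :: 'i \<Rightarrow> complex^'o^'o) = (\<lambda>i. X i j)"
  by (simp add: opX_def Mbasis_def if_distrib if_distribR cong: if_cong)

locale stinespring_kraus = hilbert_opmodule bout sc act ip
  for bout :: "'o::finite \<Rightarrow> 'b" and sc :: "complex \<Rightarrow> 'e::ab_group_add \<Rightarrow> 'e" and act ip +
  fixes K :: "('a \<times> 'b \<times> 'k) set" and E :: "'a \<times> 'b \<times> 'k \<Rightarrow> complex^'i::finite^'o"
    and C :: "'i \<Rightarrow> 'i \<Rightarrow> complex^'o^'o"
    and W :: "('i \<Rightarrow> complex^'o^'o) \<Rightarrow> 'e" and W' :: "'e \<Rightarrow> ('i \<Rightarrow> complex^'o^'o)"
  assumes finite_K: "finite K"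
    and kraus_support: "\<And>m r s. m \<in> K \<Longrightarrow> E m $ r $ s \<noteq> 0 \<Longrightarrow> bout r = fst (snd m)"
    and C_kraus: "\<And>i j. C i j = (\<Sum>m\<in>K. theta (E m *v axis j 1) (E m *v axis i 1))"
    and W_adjoint: "adjoint_pair (Mcar bout) UNIV Mip ip W W'"
    and W'_W: "\<And>v. v \<in> Mcar bout \<Longrightarrow> W' (W v) = opX C v"
begin

abbreviation Ee :: "'a \<times> 'b \<times> 'k \<Rightarrow> 'i \<Rightarrow> complex^'o" where
  "Ee m j \<equiv> E m *v axis j 1"

definition w :: "'i \<Rightarrow> 'e" where
  "w j = W (Mbasis j)"

text \<open>For an empty block the choice is junk, but then \<open>Ee m j = 0\<close> for every \<open>m\<close> of that block.\<close>

definition block_rep :: "'b \<Rightarrow> 'o" where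
  "block_rep \<beta> = (SOME r. bout r = \<beta>)"

definition ref_vec :: "'a \<times> 'b \<times> 'k \<Rightarrow> complex^'o" where
  "ref_vec m = axis (block_rep (fst (snd m))) 1"

definition kraus_gen :: "('a \<times> 'b \<times> 'k) \<times> ('a \<times> 'b \<times> 'k) \<Rightarrow> 'i \<Rightarrow> 'i \<Rightarrow> complex^'o^'o" where
  "kraus_gen p i j = theta (Ee (snd p) j) (Ee (fst p) i)"

definition same_block_pairs :: "(('a \<times> 'b \<times> 'k) \<times> ('a \<times> 'b \<times> 'k)) set" where
  "same_block_pairs = {p \<in> K \<times> K. fst (snd (fst p)) = fst (snd (snd p))}"

lemma block_Ee:
  assumes "m \<in> K" "Ee m j $ r \<noteq> 0"
  shows "bout r = fst (snd m)" and "bout (block_rep (fst (snd m))) = fst (snd m)"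
proof -
  show r: "bout r = fst (snd m)"
    using kraus_support assms by simp
  then show "bout (block_rep (fst (snd m))) = fst (snd m)"
    unfolding block_rep_def by (rule someI)
qed

lemma Ee_supported: "m \<in> K \<Longrightarrow> supported_in bout (bout (block_rep (fst (snd m)))) (Ee m j)"
  unfolding supported_in_def using block_Ee by metis

lemma ref_vec_supported: "supported_in bout (bout (block_rep (fst (snd m)))) (ref_vec m)"
  unfolding ref_vec_def by (rule supported_in_axis)

lemma C_balg [simp]: "C i j \<in> balg bout"
  unfolding C_kraus by (rule balg_sum) (rule theta_balg[OF Ee_supported Ee_supported])

lemma cadj_C: "cadj (C i j) = C j i"
  unfolding C_kraus by (simp add: cadj_sum cadj_theta)

lemma adjoint_of_W:
  assumes "adjoint_pair (Mcar bout) UNIV Mip ip W W''"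
  shows "W'' z = (\<lambda>i. ip (w i) z)"
proof
  fix i
  have "ip (w i) z = Mip (Mbasis i) (W'' z)"
    using assms Mbasis_Mcar[of i bout] by (simp add: w_def adjoint_pair_def)
  then show "W'' z i = ip (w i) z"
    by (simp add: Mip_Mbasis)
qed

lemma ip_W_left: "v \<in> Mcar bout \<Longrightarrow> ip (W v) z = Mip v (W' z)"
  using W_adjoint by (simp add: adjoint_pair_def)

lemma ip_W_W: "v \<in> Mcar bout \<Longrightarrow> v' \<in> Mcar bout \<Longrightarrow> ip (W v) (W v') = Mip v (opX C v')"
  by (simp add: ip_W_left W'_W)

lemma W_expand:
  assumes v: "v \<in> Mcar bout"
  shows "W v = (\<Sum>j\<in>UNIV. act (w j) (v j))"
proof (rule ip_eqI)
  fix z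
  have "ip (W v) z = (\<Sum>j\<in>UNIV. ip (w j) z ** cadj (v j))"
    by (simp add: ip_W_left[OF v] Mip_def adjoint_of_W[OF W_adjoint])
  also have "\<dots> = ip (\<Sum>j\<in>UNIV. act (w j) (v j)) z"
    using v by (simp add: ip_sum_left ip_act_left Mcar_def)
  finally show "ip (W v) z = ip (\<Sum>j\<in>UNIV. act (w j) (v j)) z" .
qed

definition C_preimage :: "'a \<times> 'b \<times> 'k \<Rightarrow> 'i \<Rightarrow> complex^'o^'o" where
  "C_preimage m = (SOME x. x \<in> Mcar bout \<and> opX C x = (\<lambda>i. theta (ref_vec m) (Ee m i)))"

definition y :: "'a \<times> 'b \<times> 'k \<Rightarrow> 'e" where
  "y m = W (C_preimage m)"

lemma C_preimage:
  assumes "m \<in> K"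
  shows "C_preimage m \<in> Mcar bout" and "opX C (C_preimage m) = (\<lambda>i. theta (ref_vec m) (Ee m i))"
proof -
  have "\<exists>x\<in>Mcar bout. opX C x = (\<lambda>i. theta (ref_vec m) (Ee m i))"
    using finite_K assms C_kraus C_balg
    by (rule opX_kraus_image) (rule theta_balg[OF ref_vec_supported Ee_supported[OF assms]])
  then show "C_preimage m \<in> Mcar bout" "opX C (C_preimage m) = (\<lambda>i. theta (ref_vec m) (Ee m i))"
    unfolding C_preimage_def by (metis (mono_tags, lifting) someI_ex)+
qed

lemma ip_y_w:
  assumes m: "m \<in> K"
  shows "ip (y m) (w j) = theta (Ee m j) (ref_vec m)"
proof -
  have "ip (y m) (w j) = (\<Sum>i\<in>UNIV. C i j ** cadj (C_preimage m i))"
    by (simp add: y_def w_def ip_W_W C_preimage[OF m] Mbasis_Mcar opX_Mbasis Mip_def)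
  also have "\<dots> = cadj (opX C (C_preimage m) j)"
    by (simp add: opX_def cadj_sum cadj_matrix_mult cadj_C)
  finally show ?thesis
    by (simp add: C_preimage[OF m] cadj_theta)
qed

lemma W_eq_if_opX_eq:
  assumes v: "v \<in> Mcar bout" "v' \<in> Mcar bout" and C: "opX C v = opX C v'"
  shows "W v = W v'"
proof -
  have "ip (W v - W v') (W v - W v') = 0"
    using C by (simp add: ip_diff_left ip_diff_right ip_W_W v)
  then show ?thesis
    by (rule ip_diff_self_eq_0D)
qed

text \<open>Both sides are images under \<open>W\<close> of vectors with the same image under \<open>C\<close>.\<close>

lemma w_expand: "w j = (\<Sum>m\<in>K. act (y m) (theta (Ee m j) (ref_vec m)))"
proof -
  define a where "a m = theta (Ee m j) (ref_vec m)" for m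
  have a: "a m \<in> balg bout" if "m \<in> K" for m
    unfolding a_def by (rule theta_balg[OF Ee_supported[OF that] ref_vec_supported])
  have pre: "C_preimage m i \<in> balg bout" if "m \<in> K" for m i
    using C_preimage(1)[OF that] by (simp add: Mcar_def)
  define u where "u i = (\<Sum>m\<in>K. a m ** C_preimage m i)" for i
  have u: "u \<in> Mcar bout"
    using a pre by (auto simp: Mcar_def u_def intro!: balg_sum)
  have "W u = (\<Sum>i\<in>UNIV. \<Sum>m\<in>K. act (act (w i) (C_preimage m i)) (a m))"
    using a pre by (simp add: W_expand[OF u] u_def act_sum_right act_act cong: sum.cong)
  also have "\<dots> = (\<Sum>m\<in>K. act (y m) (a m))"
    using a pre C_preimage(1)
    by (subst sum.swap) (simp add: y_def W_expand act_sum_left cong: sum.cong)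
  finally have W_u: "W u = (\<Sum>m\<in>K. act (y m) (a m))" .
  have "opX C u i = opX C (Mbasis j) i" for i
  proof -
    have "opX C u i = (\<Sum>m\<in>K. a m ** opX C (C_preimage m) i)"
      by (simp add: opX_def u_def matrix_mult_sum_left matrix_mult_sum_right matrix_mul_assoc
          sum.swap[of _ K])
    also have "\<dots> = (\<Sum>m\<in>K. theta (Ee m j) (Ee m i))"
      by (simp add: C_preimage(2) a_def ref_vec_def theta_axis_mult_theta)
    finally show ?thesis
      by (simp add: opX_Mbasis C_kraus)
  qed
  then have "W u = w j"
    unfolding w_def by (intro W_eq_if_opX_eq u Mbasis_Mcar) auto
  then show ?thesis
    using W_u a_def by simp
qed

lemma confus_multigraph_iff:
  "X \<in> confus_multigraph_of bout ip W \<longleftrightarrow>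
    (\<forall>i j. X i j \<in> balg bout) \<and> (\<exists>T T'. adjointable T T' \<and> (\<forall>i j. X i j = ip (w i) (T (w j))))"
proof
  assume "X \<in> confus_multigraph_of bout ip W"
  then obtain T T' W'' where X: "\<forall>i j. X i j \<in> balg bout" and adj: "adjointable T T'"
    and W'': "adjoint_pair (Mcar bout) UNIV Mip ip W W''"
    and eq: "\<forall>v\<in>Mcar bout. W'' (T (W v)) = opX X v"
    unfolding confus_multigraph_of_def by blast
  have "X i j = ip (w i) (T (w j))" for i j
    using eq Mbasis_Mcar[of j bout] by (simp add: w_def opX_Mbasis adjoint_of_W[OF W''] fun_eq_iff)
  then show "(\<forall>i j. X i j \<in> balg bout) \<and> (\<exists>T T'. adjointable T T' \<and> (\<forall>i j. X i j = ip (w i) (T (w j))))"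
    using X adj by blast
next
  assume "(\<forall>i j. X i j \<in> balg bout) \<and> (\<exists>T T'. adjointable T T' \<and> (\<forall>i j. X i j = ip (w i) (T (w j))))"
  then obtain T T' where X: "\<forall>i j. X i j \<in> balg bout" and adj: "adjointable T T'"
    and XT: "\<And>i j. X i j = ip (w i) (T (w j))"
    by blast
  have "W' (T (W v)) i = opX X v i" if v: "v \<in> Mcar bout" for v i
  proof -
    have "W' (T (W v)) i = ip (T' (w i)) (\<Sum>j\<in>UNIV. act (w j) (v j))"
      by (simp add: adjoint_of_W[OF W_adjoint] adjointable_right[OF adj] W_expand[OF v])
    also have "\<dots> = (\<Sum>j\<in>UNIV. v j ** ip (w i) (T (w j)))"
      using v by (simp add: ip_sum_right ip_act_right Mcar_def adjointable_right[OF adj])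
    finally show ?thesis
      by (simp add: opX_def XT)
  qed
  then show "X \<in> confus_multigraph_of bout ip W"
    unfolding confus_multigraph_of_def using X adj W_adjoint by blast
qed

lemma ip_w_rank_one_w:
  assumes "m \<in> K" "m' \<in> K" "fst (snd m) = fst (snd m')"
  shows "ip (w i) (act (y m) (ip (y m') (w j))) = kraus_gen (m, m') i j"
proof -
  have "ip (w i) (act (y m) (ip (y m') (w j))) = ip (y m') (w j) ** cadj (ip (y m) (w i))"
    by (simp add: ip_act_right)
  also have "\<dots> = theta (Ee m' j) (ref_vec m') ** theta (ref_vec m) (Ee m i)"
    using assms by (simp add: ip_y_w cadj_theta)
  finally show ?thesis
    using assms(3) by (simp add: kraus_gen_def ref_vec_def theta_axis_mult_theta)
qed

lemma msc_block_entry_kraus_gen_eq_0: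
  assumes "m \<in> K" "m' \<in> K" "fst (snd m) \<noteq> fst (snd m')" "Z \<in> balg bout"
  shows "msc (Z $ block_rep (fst (snd m')) $ block_rep (fst (snd m))) (kraus_gen (m, m') i j) = 0"
proof (cases "Ee m' j = 0 \<or> Ee m i = 0")
  case True
  then show ?thesis
    by (auto simp: kraus_gen_def vec_eq_iff)
next
  case False
  then obtain r r' where "Ee m' j $ r' \<noteq> 0" "Ee m i $ r \<noteq> 0"
    by (auto simp: vec_eq_iff)
  then have "bout (block_rep (fst (snd m'))) \<noteq> bout (block_rep (fst (snd m)))"
    using block_Ee(2) assms by metis
  then have "Z $ block_rep (fst (snd m')) $ block_rep (fst (snd m)) = 0"
    using assms(4) by (simp add: balg_iff)
  then show ?thesis
    by (simp add: vec_eq_iff)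
qed

lemma ip_w_adjointable_w_in_span:
  assumes adj: "adjointable T T'"
  shows "\<exists>c. \<forall>i j. ip (w i) (T (w j)) = (\<Sum>p\<in>same_block_pairs. msc (c p) (kraus_gen p i j))"
proof -
  define a where "a m j = theta (Ee m j) (ref_vec m)" for m j
  have a: "m \<in> K \<Longrightarrow> a m j \<in> balg bout" for m j
    unfolding a_def by (rule theta_balg[OF Ee_supported ref_vec_supported])
  define Z where "Z m m' = ip (y m) (T (y m'))" for m m'
  define c where "c p = Z (fst p) (snd p) $ block_rep (fst (snd (snd p))) $ block_rep (fst (snd (fst p)))"
    for p
  have "ip (w i) (T (w j)) = (\<Sum>p\<in>same_block_pairs. msc (c p) (kraus_gen p i j))" for i j
  proof -
    have "T (w j) = (\<Sum>m\<in>K. act (T (y m)) (a m j))"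
      unfolding w_expand[of j] a_def[symmetric] using a by (rule adjointable_module_map[OF adj])
    then have "ip (w i) (T (w j)) =
        ip (\<Sum>m\<in>K. act (y m) (a m i)) (\<Sum>m'\<in>K. act (T (y m')) (a m' j))"
      by (simp add: w_expand[of i] a_def)
    also have "\<dots> = (\<Sum>m'\<in>K. \<Sum>m\<in>K. a m' j ** (Z m m' ** cadj (a m i)))"
      using a by (simp add: ip_sum_left ip_sum_right ip_act_left ip_act_right Z_def
          matrix_mult_sum_left)
    also have "\<dots> = (\<Sum>p\<in>K \<times> K. msc (c p) (kraus_gen p i j))"
      by (subst sum.swap) (simp add: sum.cartesian_product a_def ref_vec_def cadj_theta
          matrix_mul_assoc theta_axis_mult_mult_theta c_def kraus_gen_def split_def)
    also have "\<dots> = (\<Sum>p\<in>same_block_pairs. msc (c p) (kraus_gen p i j))"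
    proof (rule sum.mono_neutral_right)
      show "finite (K \<times> K)"
        using finite_K by simp
      show "\<forall>p\<in>K \<times> K - same_block_pairs. msc (c p) (kraus_gen p i j) = 0"
      proof
        fix p assume "p \<in> K \<times> K - same_block_pairs"
        then have "fst p \<in> K" "snd p \<in> K" "fst (snd (fst p)) \<noteq> fst (snd (snd p))"
          by (auto simp: same_block_pairs_def)
        then show "msc (c p) (kraus_gen p i j) = 0"
          using msc_block_entry_kraus_gen_eq_0[of "fst p" "snd p" "Z (fst p) (snd p)" i j]
          by (simp add: c_def Z_def)
      qed
    qed (auto simp: same_block_pairs_def)
    finally show ?thesis .
  qed
  then show ?thesis
    by blast
qed

lemma kraus_gen_balg:
  assumes "p \<in> same_block_pairs"
  shows "kraus_gen p i j \<in> balg bout"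
proof -
  have "fst p \<in> K" "snd p \<in> K" "fst (snd (fst p)) = fst (snd (snd p))"
    using assms by (auto simp: same_block_pairs_def)
  then show ?thesis
    unfolding kraus_gen_def by (metis theta_balg Ee_supported)
qed

lemma confus_multigraph_eq_span:
  "confus_multigraph_of bout ip W = span_fam same_block_pairs kraus_gen"
proof (intro set_eqI iffI)
  fix X assume "X \<in> confus_multigraph_of bout ip W"
  then obtain T T' where adj: "adjointable T T'" and XT: "\<forall>i j. X i j = ip (w i) (T (w j))"
    unfolding confus_multigraph_iff by blast
  obtain c where "\<forall>i j. ip (w i) (T (w j)) = (\<Sum>p\<in>same_block_pairs. msc (c p) (kraus_gen p i j))"
    using ip_w_adjointable_w_in_span[OF adj] by blast
  then have "X = (\<lambda>i j. \<Sum>p\<in>same_block_pairs. msc (c p) (kraus_gen p i j))"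
    using XT by (intro ext) simp
  then show "X \<in> span_fam same_block_pairs kraus_gen"
    unfolding span_fam_def by blast
next
  fix X assume "X \<in> span_fam same_block_pairs kraus_gen"
  then obtain c where X: "X = (\<lambda>i j. \<Sum>p\<in>same_block_pairs. msc (c p) (kraus_gen p i j))"
    unfolding span_fam_def by blast
  define T where "T z = (\<Sum>p\<in>same_block_pairs. sc (c p) (act (y (fst p)) (ip (y (snd p)) z)))" for z
  define T' where "T' z = (\<Sum>p\<in>same_block_pairs. sc (cnj (c p)) (act (y (snd p)) (ip (y (fst p)) z)))"
    for z
  have "adjointable T T'"
    unfolding T_def T'_def by (rule adjointable_lincomb) (rule adjointable_rank_one)
  moreover have "X i j = ip (w i) (T (w j))" for i j
  proof -
    have "ip (w i) (T (w j)) =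
        (\<Sum>p\<in>same_block_pairs. msc (c p) (ip (w i) (act (y (fst p)) (ip (y (snd p)) (w j)))))"
      by (simp add: T_def ip_sum_right ip_sc_right)
    also have "\<dots> = X i j"
      unfolding X by (intro sum.cong refl) (auto simp: same_block_pairs_def ip_w_rank_one_w)
    finally show ?thesis
      by simp
  qed
  moreover have "X i j \<in> balg bout" for i j
    unfolding X by (intro balg_sum balg_msc kraus_gen_balg)
  ultimately show "X \<in> confus_multigraph_of bout ip W"
    unfolding confus_multigraph_iff by blast
qed

end

theorem theorem3p16:
  fixes bin :: "'i::finite \<Rightarrow> 'a" and bout :: "'o::finite \<Rightarrow> 'b"
    and \<Phi> :: "complex^'i^'i \<Rightarrow> complex^'o^'o"
    and K :: "('a \<times> 'b \<times> 'k) set" and E :: "'a \<times> 'b \<times> 'k \<Rightarrow> complex^'i^'o"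
    and sc :: "complex \<Rightarrow> 'e::ab_group_add \<Rightarrow> 'e"
    and act :: "'e \<Rightarrow> complex^'o^'o \<Rightarrow> 'e"
    and ip :: "'e \<Rightarrow> 'e \<Rightarrow> complex^'o^'o"
    and W :: "('i \<Rightarrow> complex^'o^'o) \<Rightarrow> 'e"
  assumes "quantum_channel bin bout \<Phi>"
    and "kraus_related bin bout \<Phi> K E"
    and "stinespring_module bin bout \<Phi> sc act ip W"
  shows "confus_multigraph_of bout ip W =
           span_fam {((a, b, k), (a', b', l)). (a, b, k) \<in> K \<and> (a', b', l) \<in> K \<and> b = b'}
             (\<lambda>((a, b, k), (a', b', l)) i j.
                theta (E (a', b', l) *v axis j 1) (E (a, b, k) *v axis i 1))"
proof -
  obtain W' where "adjoint_pair (Mcar bout) UNIV Mip ip W W'"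
    and "\<forall>v\<in>Mcar bout. W' (W v) = opX (Cmat bin \<Phi>) v"
    using assms(3) unfolding stinespring_module_def by blast
  then interpret stinespring_kraus bout sc act ip K E "Cmat bin \<Phi>" W W'
  proof unfold_locales
    show "hilbert_opmod bout sc act ip"
      using assms(3) by (simp add: stinespring_module_def)
    show "finite K"
      using assms(2) by (rule kraus_related_finite)
    show "\<And>m r s. m \<in> K \<Longrightarrow> E m $ r $ s \<noteq> 0 \<Longrightarrow> bout r = fst (snd m)"
      using kraus_related_support[OF assms(2)] by blast
    show "\<And>i j. Cmat bin \<Phi> i j = (\<Sum>m\<in>K. theta (E m *v axis j 1) (E m *v axis i 1))"
      by (rule Cmat_kraus[OF assms(1,2)])
  qed auto
  have "same_block_pairs = {((a, b, k), (a', b', l)). (a, b, k) \<in> K \<and> (a', b', l) \<in> K \<and> b = b'}"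
    by (auto simp: same_block_pairs_def)
  moreover have "kraus_gen = (\<lambda>((a, b, k), (a', b', l)) i j.
      theta (E (a', b', l) *v axis j 1) (E (a, b, k) *v axis i 1))"
    by (auto simp: kraus_gen_def fun_eq_iff)
  ultimately show ?thesis
    using confus_multigraph_eq_span by simp
qed

end
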